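(* Let $q$ be a prime power and $n\ge 3$ an integer. Then $$B_q(n,3,3;3)\le\left(1+\frac{1}{2\left[{3\atop 2}\right]_q-1}\right)\frac{\left[{n\atop 2}\right]_q}{\left[{3\atop 2}\right]_q}.$$
   Context: For a prime power $q$, $\mathcal{G}_q(n,k)$ denotes the set of all $k$-dimensional subspaces of $\mathbb{F}_q^n$, and the Gaussian binomial coefficient is $\left[{n\atop k}\right]_q=\prod_{i=0}^{k-1}\frac{q^n-q^i}{q^k-q^i}=|\mathcal{G}_q(n,k)|$. An $\alpha$-$(n,k,\delta)_q^c$ covering Grassmannian code is a subset $\mathcal{C}\subseteq\mathcal{G}_q(n,k)$ (no repeated codewords) such that every set of $\alpha$ distinct codewords of $\mathcal{C}$ spans a subspace of $\mathbb{F}_q^n$ of dimension at least $k+\delta$. $B_q(n,k,\delta;\alpha)$ denotes the maximum size of an $\alpha$-$(n,k,\delta)_q^c$ code. *)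

theory Defs
  imports "HOL-Analysis.Analysis"
begin

text \<open>F_q^n is modelled as the type 'a ^ 'n with 'a a finite field (q = CARD('a))
 and n = CARD('n); subspaces and dimensions are those of the library
 vector space interpretation vec (scalar multiplication (*s)).\<close>

definition grassmannian :: "nat \<Rightarrow> ('a::field ^ 'n) set set" where
  "grassmannian k = {U. vec.subspace U \<and> vec.dim U = k}"

definition gauss_binom :: "real \<Rightarrow> nat \<Rightarrow> nat \<Rightarrow> real" where
  "gauss_binom q n k = (\<Prod>i<k. (q ^ n - q ^ i) / (q ^ k - q ^ i))"

definition covering_code :: "('a::field ^ 'n) set set \<Rightarrow> nat \<Rightarrow> nat \<Rightarrow> nat \<Rightarrow> bool" where
  "covering_code C k \<delta> \<alpha> \<longleftrightarrow> C \<subseteq> grassmannian k \<and>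
     (\<forall>S. S \<subseteq> C \<and> card S = \<alpha> \<longrightarrow> vec.dim (vec.span (\<Union>S)) \<ge> k + \<delta>)"

definition Bq :: "('a::field ^ 'n) itself \<Rightarrow> nat \<Rightarrow> nat \<Rightarrow> nat \<Rightarrow> nat" where
  "Bq _ k \<delta> \<alpha> = Sup {card C | C :: ('a ^ 'n) set set. covering_code C k \<delta> \<alpha>}"

end

theory Submission
  imports Defs
begin

text \<open>Double count ordered pairs of linearly independent vectors. A codeword, being a 3-space,
  contains \<open>(q^3-1)(q^3-q)\<close> of them, and \<open>\<bbbF>\<^sub>q\<^sup>n\<close> contains \<open>(q^n-1)(q^n-q)\<close>. If a codeword \<open>U\<close>
  shares such a pair with \<open>V\<close> and another with \<open>W\<close>, then \<open>U\<close>, \<open>V\<close>, \<open>W\<close> all lie in the span of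
  five vectors, which the covering property forbids unless \<open>V = W\<close>. So every pair lies in at
  most two codewords, and the pairs \<open>U\<close> shares all lie in \<open>U \<inter> V\<close> for a single partner \<open>V\<close>;
  this is a space of dimension at most 2, so they number at most \<open>(q^2-1)(q^2-q)\<close>. Hence
  \<open>2 |C| (q^3-1)(q^3-q) \<le> 2 (q^n-1)(q^n-q) + |C| (q^2-1)(q^2-q)\<close>, which rearranges to the bound.\<close>

lemma card_span_independent:
  fixes B :: "('a::{field,finite}^'n) set"
  assumes "vec.independent B"
  shows "card (vec.span B) = CARD('a) ^ card B"
proof -
  have "finite B" by simp
  from this assms show ?thesis
  proof (induction B rule: finite_induct)
    case empty
    then show ?case by simp
  next
    case (insert x F)
    have indep: "vec.independent F" and x_notin: "x \<notin> vec.span F"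
      using insert.prems insert.hyps by (simp_all add: vec.independent_insert)
    define f where "f = (\<lambda>(c, y). y + c *s x)"
    have span_eq: "vec.span (insert x F) = f ` (UNIV \<times> vec.span F)"
    proof
      show "vec.span (insert x F) \<subseteq> f ` (UNIV \<times> vec.span F)"
      proof
        fix z assume "z \<in> vec.span (insert x F)"
        then obtain c where "z - c *s x \<in> vec.span F" unfolding vec.span_insert by auto
        then show "z \<in> f ` (UNIV \<times> vec.span F)"
          unfolding f_def by (intro image_eqI[of _ _ "(c, z - c *s x)"]) auto
      qed
      show "f ` (UNIV \<times> vec.span F) \<subseteq> vec.span (insert x F)"
        unfolding f_def
      proof clarify
        fix c y assume "y \<in> vec.span F"
        then show "y + c *s x \<in> vec.span (insert x F)"
          by (meson insertI1 subset_insertI subsetD vec.span_add vec.span_base vec.span_mono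
              vec.span_scale)
      qed
    qed
    have "inj_on f (UNIV \<times> vec.span F)"
    proof (rule inj_onI, clarify)
      fix c y c' y'
      assume y: "y \<in> vec.span F" and y': "y' \<in> vec.span F" and eq: "f (c, y) = f (c', y')"
      have diff: "(c - c') *s x = y' - y"
        using eq by (simp add: f_def algebra_simps vector_sub_rdistrib)
      have "c = c'"
      proof (rule ccontr)
        assume "c \<noteq> c'"
        then have "x = inverse (c - c') *s (y' - y)"
          by (simp add: diff[symmetric] del: vector_sub_rdistrib)
        also have "\<dots> \<in> vec.span F"
          using y y' by (intro vec.span_scale vec.span_diff)
        finally show False using x_notin by simp
      qed
      with eq show "c = c' \<and> y = y'" by (simp add: f_def)
    qed
    then have "card (vec.span (insert x F)) = CARD('a) * card (vec.span F)"
      unfolding span_eq by (simp add: card_image card_cartesian_product)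
    then show ?case using insert.IH[OF indep] insert.hyps by simp
  qed
qed

lemma card_subspace:
  fixes S :: "('a::{field,finite}^'n) set"
  assumes "vec.subspace S"
  shows "card S = CARD('a) ^ vec.dim S"
proof -
  obtain B where B: "B \<subseteq> S" "vec.independent B" "S \<subseteq> vec.span B" "card B = vec.dim S"
    by (rule vec.basis_exists)
  have "vec.span B = S" using B assms by (intro vec.span_subspace) auto
  then show ?thesis using card_span_independent[OF B(2)] B(4) by simp
qed

definition independent_pairs :: "('a::field^'n) set \<Rightarrow> (('a^'n) \<times> ('a^'n)) set" where
  "independent_pairs S = {(x, y). x \<in> S \<and> y \<in> S \<and> x \<noteq> 0 \<and> y \<notin> vec.span {x}}"

lemma independent_pairs_Int: "independent_pairs (U \<inter> V) = independent_pairs U \<inter> independent_pairs V"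
  by (auto simp: independent_pairs_def)

lemma card_independent_pairs:
  fixes S :: "('a::{field,finite}^'n) set"
  assumes "vec.subspace S"
  shows "card (independent_pairs S) = (CARD('a) ^ vec.dim S - 1) * (CARD('a) ^ vec.dim S - CARD('a))"
proof -
  have Sigma_eq: "independent_pairs S = Sigma (S - {0}) (\<lambda>x. S - vec.span {x})"
    unfolding independent_pairs_def by auto
  have "card (S - vec.span {x}) = card S - CARD('a)" if x: "x \<in> S - {0}" for x
  proof -
    have "vec.independent {x}" using x by (simp add: vec.independent_insert)
    then have "card (vec.span {x}) = CARD('a)" by (simp add: card_span_independent)
    moreover have "vec.span {x} \<subseteq> S" using x assms by (intro vec.span_minimal) auto
    ultimately show ?thesis by (simp add: card_Diff_subset)
  qed
  then have "card (independent_pairs S) = (card S - 1) * (card S - CARD('a))"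
    unfolding Sigma_eq using assms by (simp add: vec.subspace_0)
  then show ?thesis by (simp add: card_subspace[OF assms])
qed

lemma independent_pair_count_mono:
  fixes q :: nat
  assumes "d \<le> e"
  shows "(q ^ d - 1) * (q ^ d - q) \<le> (q ^ e - 1) * (q ^ e - q)"
proof (cases "q = 0")
  case False
  then have "q ^ d \<le> q ^ e" using assms by (simp add: power_increasing)
  then show ?thesis by (intro mult_le_mono diff_le_mono)
qed (use assms in \<open>simp add: power_0_left\<close>)

lemma dim_Int_less:
  fixes U V :: "('a::field^'n) set"
  assumes "vec.subspace U" "vec.subspace V" "vec.dim U = k" "vec.dim V = k" "U \<noteq> V"
  shows "vec.dim (U \<inter> V) < k"
proof (rule ccontr)
  assume "\<not> ?thesis"
  then have "vec.span (U \<inter> V) = vec.span U" "vec.span (U \<inter> V) = vec.span V"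
    using assms by (auto intro!: vec.dim_eq_span)
  then have "U \<inter> V = U" "U \<inter> V = V"
    using assms by (simp_all add: vec.span_eq_iff[THEN iffD2] vec.subspace_inter)
  with assms(5) show False by simp
qed

lemma card_shared_independent_pairs_le:
  fixes U V :: "('a::{field,finite}^'n) set"
  assumes "vec.subspace U" "vec.subspace V" "vec.dim U = k" "vec.dim V = k" "U \<noteq> V"
  shows "card (independent_pairs U \<inter> independent_pairs V)
    \<le> (CARD('a) ^ (k - 1) - 1) * (CARD('a) ^ (k - 1) - CARD('a))"
proof -
  have "vec.dim (U \<inter> V) \<le> k - 1" using dim_Int_less[OF assms] by simp
  then have "(CARD('a) ^ vec.dim (U \<inter> V) - 1) * (CARD('a) ^ vec.dim (U \<inter> V) - CARD('a))
    \<le> (CARD('a) ^ (k - 1) - 1) * (CARD('a) ^ (k - 1) - CARD('a))"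
    by (rule independent_pair_count_mono)
  then show ?thesis
    using assms by (simp add: independent_pairs_Int[symmetric] card_independent_pairs
        vec.subspace_inter)
qed

lemma subspace_dim_3_span_pair_insert:
  fixes U :: "('a::field^'n) set"
  assumes "vec.subspace U" "vec.dim U = 3" "(x, y) \<in> independent_pairs U"
  obtains u where "U \<subseteq> vec.span {x, y, u}"
proof -
  have "x \<noteq> 0" "y \<notin> vec.span {x}" "x \<in> U" "y \<in> U"
    using assms(3) by (auto simp: independent_pairs_def)
  moreover from this have "x \<noteq> y" by (metis singletonI vec.span_base)
  ultimately have "vec.independent {y, x}" "{y, x} \<subseteq> U"
    by (simp_all add: vec.independent_insert)
  then obtain B where B: "{y, x} \<subseteq> B" "B \<subseteq> U" "vec.independent B" "U \<subseteq> vec.span B"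
    using vec.maximal_independent_subset_extend by metis
  have "card B = 3" using vec.basis_card_eq_dim[OF B(2) B(4) B(3)] assms(2) by simp
  with B(1) \<open>x \<noteq> y\<close> have "card (B - {y, x}) = 1"
    by (simp add: card_Diff_subset)
  then obtain u where "B - {y, x} = {u}" by (auto simp: card_Suc_eq)
  then have "B \<subseteq> {x, y, u}" by auto
  then show ?thesis using B(4) that vec.span_mono by blast
qed

lemma covering_code_memD:
  assumes "covering_code C k \<delta> \<alpha>" "U \<in> C"
  shows "vec.subspace U" "vec.dim U = k"
  using assms by (auto simp: covering_code_def grassmannian_def)

lemma covering_code_spanD:
  assumes "covering_code C k \<delta> \<alpha>" "S \<subseteq> C" "card S = \<alpha>"
  shows "k + \<delta> \<le> vec.dim (vec.span (\<Union>S))"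
  using assms unfolding covering_code_def by blast

lemma covering_code_333_partner_unique:
  fixes C :: "('a::field^'n) set set"
  assumes code: "covering_code C 3 3 3" and in_C: "U \<in> C" "V \<in> C" "W \<in> C"
    and distinct: "V \<noteq> U" "W \<noteq> U"
    and p: "p \<in> independent_pairs U \<inter> independent_pairs V"
    and p': "p' \<in> independent_pairs U \<inter> independent_pairs W"
  shows "V = W"
proof (rule ccontr)
  assume "V \<noteq> W"
  obtain x y x' y' where xy: "p = (x, y)" and xy': "p' = (x', y')" by fastforce
  note dim3 = covering_code_memD[OF code]
  obtain u where u: "U \<subseteq> vec.span {x, y, u}"
    by (rule subspace_dim_3_span_pair_insert[OF dim3[OF in_C(1)]]) (use p xy in auto)
  obtain v where v: "V \<subseteq> vec.span {x, y, v}"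
    by (rule subspace_dim_3_span_pair_insert[OF dim3[OF in_C(2)]]) (use p xy in auto)
  obtain w where w: "W \<subseteq> vec.span {x', y', w}"
    by (rule subspace_dim_3_span_pair_insert[OF dim3[OF in_C(3)]]) (use p' xy' in auto)
  define T where "T = {x, y, u, v, w}"
  have "vec.span {x, y, u} \<subseteq> vec.span T" "vec.span {x, y, v} \<subseteq> vec.span T"
    unfolding T_def by (intro vec.span_mono; blast)+
  with u v have U_T: "U \<subseteq> vec.span T" and V_T: "V \<subseteq> vec.span T" by blast+
  have "x' \<in> U" "y' \<in> U" using p' xy' by (simp_all add: independent_pairs_def)
  moreover have "w \<in> vec.span T" unfolding T_def by (intro vec.span_base) simp
  ultimately have "{x', y', w} \<subseteq> vec.span T" using U_T by blast
  then have "W \<subseteq> vec.span T"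
    using w vec.span_minimal[OF _ vec.subspace_span] by blast
  with U_T V_T have "\<Union>{U, V, W} \<subseteq> vec.span T" by blast
  then have "vec.dim (vec.span (\<Union>{U, V, W})) \<le> card T"
    unfolding vec.dim_span by (rule vec.dim_le_card) (simp add: T_def)
  also have "card T \<le> 5" unfolding T_def using card_length[of "[x, y, u, v, w]"] by simp
  finally have "vec.dim (vec.span (\<Union>{U, V, W})) \<le> 5" .
  moreover have "card {U, V, W} = 3" using distinct \<open>V \<noteq> W\<close> by simp
  then have "3 + 3 \<le> vec.dim (vec.span (\<Union>{U, V, W}))"
    using in_C by (intro covering_code_spanD[OF code]) simp_all
  ultimately show False by simp
qed

lemma sum_card_swap:
  assumes "finite C" "finite X" "\<And>U. U \<in> C \<Longrightarrow> A U \<subseteq> X"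
  shows "(\<Sum>U\<in>C. card (A U)) = (\<Sum>p\<in>X. card {U\<in>C. p \<in> A U})"
proof -
  have "(\<Sum>U\<in>C. card (A U)) = (\<Sum>U\<in>C. \<Sum>p\<in>X. of_bool (p \<in> A U))"
    using assms by (intro sum.cong refl) (auto simp: Int_def intro!: arg_cong[where f = card])
  also have "\<dots> = (\<Sum>p\<in>X. \<Sum>U\<in>C. of_bool (p \<in> A U))" by (rule sum.swap)
  also have "\<dots> = (\<Sum>p\<in>X. card {U\<in>C. p \<in> A U})"
    using assms by (simp add: Int_def)
  finally show ?thesis .
qed

lemma covering_code_333_pair_multiplicity_le_2:
  fixes C :: "('a::field^'n) set set"
  assumes code: "covering_code C 3 3 3"
  shows "card {U\<in>C. p \<in> independent_pairs U} \<le> 2"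
proof (rule ccontr)
  assume "\<not> ?thesis"
  then have "3 \<le> card {U\<in>C. p \<in> independent_pairs U}" by simp
  then obtain S where S: "S \<subseteq> {U\<in>C. p \<in> independent_pairs U}" "card S = 3"
    by (rule obtain_subset_with_card_n)
  from \<open>card S = 3\<close> obtain U V W where S_eq: "S = {U, V, W}"
    and neq: "V \<noteq> U" "W \<noteq> U" "V \<noteq> W"
    by (auto simp: card_3_iff)
  with S have in_C: "U \<in> C" "V \<in> C" "W \<in> C"
    and pV: "p \<in> independent_pairs U \<inter> independent_pairs V"
    and pW: "p \<in> independent_pairs U \<inter> independent_pairs W"
    by auto
  have "V = W" by (rule covering_code_333_partner_unique[OF code in_C neq(1,2) pV pW])
  with \<open>V \<noteq> W\<close> show False ..
qed

lemma covering_code_333_card_shared_pairs_le: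
  fixes C :: "('a::{field,finite}^'n) set set"
  assumes code: "covering_code C 3 3 3" and "U \<in> C"
  shows "card {p \<in> independent_pairs U. 2 \<le> card {W\<in>C. p \<in> independent_pairs W}}
    \<le> (CARD('a) ^ 2 - 1) * (CARD('a) ^ 2 - CARD('a))"
    (is "card ?shared \<le> _")
proof (cases "?shared = {}")
  case False
  then obtain p where p: "p \<in> independent_pairs U" "2 \<le> card {W\<in>C. p \<in> independent_pairs W}"
    by blast
  then have "\<not> {W\<in>C. p \<in> independent_pairs W} \<subseteq> {U}"
    using card_mono[of "{U}" "{W\<in>C. p \<in> independent_pairs W}"] by force
  then obtain V where V: "V \<in> C" "V \<noteq> U" "p \<in> independent_pairs V" by blast
  have "?shared \<subseteq> independent_pairs U \<inter> independent_pairs V"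
  proof
    fix p' assume p': "p' \<in> ?shared"
    then have "\<not> {W\<in>C. p' \<in> independent_pairs W} \<subseteq> {U}"
      using card_mono[of "{U}" "{W\<in>C. p' \<in> independent_pairs W}"] by force
    then obtain W where W: "W \<in> C" "W \<noteq> U" "p' \<in> independent_pairs W" by blast
    from p' have p'_U: "p' \<in> independent_pairs U" by simp
    have "V = W"
      by (rule covering_code_333_partner_unique[OF code \<open>U \<in> C\<close> V(1) W(1) V(2) W(2)
            IntI[OF p(1) V(3)] IntI[OF p'_U W(3)]])
    with W(3) p'_U show "p' \<in> independent_pairs U \<inter> independent_pairs V" by simp
  qed
  then have "card ?shared \<le> card (independent_pairs U \<inter> independent_pairs V)"
    by (simp add: card_mono)
  also have "\<dots> \<le> (CARD('a) ^ (3 - 1) - 1) * (CARD('a) ^ (3 - 1) - CARD('a))"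
    using covering_code_memD[OF code] \<open>U \<in> C\<close> V
    by (intro card_shared_independent_pairs_le) auto
  finally show ?thesis by simp
next
  case True
  show ?thesis unfolding True by simp
qed

lemma covering_code_333_pair_count:
  fixes C :: "('a::{field,finite}^'n) set set"
  assumes code: "covering_code C 3 3 3"
  defines "q \<equiv> CARD('a)" and "n \<equiv> CARD('n)"
  shows "2 * card C * ((q ^ 3 - 1) * (q ^ 3 - q))
    \<le> 2 * ((q ^ n - 1) * (q ^ n - q)) + card C * ((q ^ 2 - 1) * (q ^ 2 - q))"
proof -
  define mult where "mult p = card {U\<in>C. p \<in> independent_pairs U}" for p
  define shared where "shared U = {p \<in> independent_pairs U. 2 \<le> mult p}" for U
  define X where "X = independent_pairs (UNIV :: ('a^'n) set)"
  have in_X: "independent_pairs U \<subseteq> X" "shared U \<subseteq> X" for U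
    unfolding X_def shared_def independent_pairs_def by auto
  have card_X: "card X = (q ^ n - 1) * (q ^ n - q)"
    unfolding X_def q_def n_def card_independent_pairs[OF vec.subspace_UNIV] vec_dim_card ..
  have double_mult: "2 * mult p \<le> 2 + card {U\<in>C. p \<in> shared U}" for p
  proof (cases "2 \<le> mult p")
    case True
    then have "{U\<in>C. p \<in> shared U} = {U\<in>C. p \<in> independent_pairs U}"
      unfolding shared_def by auto
    then show ?thesis
      using covering_code_333_pair_multiplicity_le_2[OF code, of p] unfolding mult_def by simp
  qed simp
  have "2 * card C * ((q ^ 3 - 1) * (q ^ 3 - q)) = (\<Sum>U\<in>C. 2 * card (independent_pairs U))"
    using covering_code_memD[OF code] by (simp add: card_independent_pairs q_def)
  also have "\<dots> = (\<Sum>p\<in>X. 2 * mult p)"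
    unfolding mult_def by (simp add: sum_distrib_left[symmetric] sum_card_swap in_X)
  also have "\<dots> \<le> (\<Sum>p\<in>X. 2 + card {U\<in>C. p \<in> shared U})"
    by (intro sum_mono double_mult)
  also have "\<dots> = 2 * card X + (\<Sum>U\<in>C. card (shared U))"
    unfolding sum.distrib using sum_card_swap[of C X shared] in_X(2) by simp
  also have "\<dots> \<le> 2 * card X + card C * ((q ^ 2 - 1) * (q ^ 2 - q))"
    using sum_mono[of C "\<lambda>U. card (shared U)" "\<lambda>_. (q ^ 2 - 1) * (q ^ 2 - q)"]
      covering_code_333_card_shared_pairs_le[OF code]
    unfolding shared_def mult_def q_def by simp
  finally show ?thesis unfolding card_X .
qed

lemma card_field_ge_2: "2 \<le> CARD('a::{field,finite})"
  using card_mono[of UNIV "{0::'a, 1}"] by simp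

lemma independent_pair_count_pos:
  fixes q :: nat
  assumes "2 \<le> q" "2 \<le> d"
  shows "0 < (q ^ d - 1) * (q ^ d - q)"
proof -
  have "q ^ 1 < q ^ d" using assms by (intro power_strict_increasing) auto
  then show ?thesis using assms by simp
qed

lemma independent_pair_count_strict_mono:
  fixes q :: nat
  assumes "2 \<le> q" "2 \<le> d" "d < e"
  shows "(q ^ d - 1) * (q ^ d - q) < (q ^ e - 1) * (q ^ e - q)"
proof -
  have "q ^ 1 < q ^ d" "q ^ d < q ^ e" by (rule power_strict_increasing, use assms in auto)+
  then have "q ^ d - 1 < q ^ e - 1" "q ^ d - q < q ^ e - q" by (simp_all only: power_one_right)
  then show ?thesis by (intro mult_strict_mono) auto
qed

lemma gauss_binom_2:
  fixes q :: nat
  assumes "1 \<le> m"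
  shows "gauss_binom (real q) m 2 = real ((q ^ m - 1) * (q ^ m - q)) / real ((q ^ 2 - 1) * (q ^ 2 - q))"
proof -
  have of_nat_count: "real ((q ^ k - 1) * (q ^ k - q)) = (real q ^ k - 1) * (real q ^ k - real q)"
    if "1 \<le> k" for k
  proof (cases "q = 0")
    case False
    then have "1 \<le> q ^ k" "q \<le> q ^ k" using \<open>1 \<le> k\<close> power_increasing[of 1 k q] by simp_all
    then show ?thesis by (simp add: of_nat_diff)
  qed (use that in simp)
  have "gauss_binom (real q) m 2
    = (real q ^ m - real q) * (real q ^ m - 1) / ((real q ^ 2 - real q) * (real q ^ 2 - 1))"
    by (simp add: gauss_binom_def lessThan_nat_numeral)
  also have "\<dots> = real ((q ^ m - 1) * (q ^ m - q)) / real ((q ^ 2 - 1) * (q ^ 2 - q))"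
    by (simp only: of_nat_count[OF assms] of_nat_count[of 2, OF one_le_numeral] mult.commute)
  finally show ?thesis .
qed

lemma Bq_attained:
  assumes "\<alpha> \<noteq> 0"
  obtains C :: "('a::{field,finite}^'n) set set"
  where "covering_code C k \<delta> \<alpha>" "Bq TYPE('a^'n) k \<delta> \<alpha> = card C"
proof -
  let ?K = "card ` {C :: ('a^'n) set set. covering_code C k \<delta> \<alpha>}"
  have "covering_code ({} :: ('a^'n) set set) k \<delta> \<alpha>" using assms by (simp add: covering_code_def)
  then have "?K \<noteq> {}" by blast
  moreover have "Bq TYPE('a^'n) k \<delta> \<alpha> = Sup ?K" unfolding Bq_def by (simp add: image_Collect)
  ultimately have "Bq TYPE('a^'n) k \<delta> \<alpha> \<in> ?K" by (simp add: cSup_eq_Max)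
  then show ?thesis using that by blast
qed

lemma le_of_weighted_double_count:
  fixes a b N c :: real
  assumes "0 < b" "b < a" "2 * c * a \<le> 2 * N + c * b"
  shows "c \<le> (1 + 1 / (2 * (a / b) - 1)) * (N / b) / (a / b)"
proof -
  have "(1 + 1 / (2 * (a / b) - 1)) * (N / b) / (a / b) = 2 * N / (2 * a - b)"
    using assms by (simp add: field_simps)
  moreover have "c * (2 * a - b) \<le> 2 * N" using assms(3) by (simp add: algebra_simps)
  ultimately show ?thesis using assms by (simp add: pos_le_divide_eq)
qed

theorem mainTheorem2:
  assumes "CARD('n::finite) \<ge> 3"
  shows "real (Bq TYPE('a::{field,finite} ^ 'n) 3 3 3)
    \<le> (1 + 1 / (2 * gauss_binom (real CARD('a)) 3 2 - 1))
       * gauss_binom (real CARD('a)) (CARD('n)) 2 / gauss_binom (real CARD('a)) 3 2"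
proof -
  obtain C :: "('a^'n) set set" where code: "covering_code C 3 3 3"
    and Bq_eq: "Bq TYPE('a^'n) 3 3 3 = card C"
    using Bq_attained[of 3] by auto
  define P where "P m = (CARD('a) ^ m - 1) * (CARD('a) ^ m - CARD('a))" for m
  have "2 * card C * P 3 \<le> 2 * P (CARD('n)) + card C * P 2"
    using covering_code_333_pair_count[OF code] unfolding P_def .
  then have count:
      "2 * real (card C) * real (P 3) \<le> 2 * real (P (CARD('n))) + real (card C) * real (P 2)"
    by (metis (mono_tags) of_nat_le_iff of_nat_add of_nat_mult of_nat_numeral)
  have q2: "2 \<le> CARD('a)" by (rule card_field_ge_2)
  have "0 < P 2" unfolding P_def by (rule independent_pair_count_pos[OF q2 order_refl])
  moreover have "P 2 < P 3" unfolding P_def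
    by (rule independent_pair_count_strict_mono[OF q2 order_refl]) simp
  moreover have "gauss_binom (real CARD('a)) m 2 = real (P m) / real (P 2)" if "1 \<le> m" for m
    unfolding P_def using that by (rule gauss_binom_2)
  ultimately show ?thesis
    using le_of_weighted_double_count[OF _ _ count] assms Bq_eq by simp
qed

end
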